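(* Let $p$ be prime and $(x_i,y_i)_{0\le i\le p-1}\in(\mathbb{Z}_p\times\mathbb{Z}_p)^p$ with $x_i\neq x_j$ for all $i\ne j$, and suppose the $y_i$ are not all equal. Then there exists $c\in\mathbb{Z}_p^*$ (i.e. $c\not\equiv0$) which is not compatible with $(x_i,y_i)_{0\le i\le p-1}$.
   Context: A value $c\in\mathbb{Z}_p$ is compatible with $p$ pairs $(x_i,y_i)_{0\le i\le p-1}$ in $\mathbb{Z}_p\times\mathbb{Z}_p$ if $x_i+cy_i\not\equiv x_j+cy_j\pmod p$ for all $i\neq j$, i.e. $\{x_i+cy_i\}_{0\le i\le p-1}=\mathbb{Z}_p$. *)

theory Defs
  imports "HOL-Number_Theory.Cong"
begin

text \<open>Elements of Z_p are represented by integers in {0..<p}; congruence mod p is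
  used for equality in Z_p.\<close>

definition compatible :: "nat \<Rightarrow> int \<Rightarrow> (nat \<Rightarrow> int) \<Rightarrow> (nat \<Rightarrow> int) \<Rightarrow> bool" where
  "compatible p c x y \<longleftrightarrow>
     (\<forall>i<p. \<forall>j<p. i \<noteq> j \<longrightarrow> \<not> [x i + c * y i = x j + c * y j] (mod int p))"

end

theory Submission
  imports Defs
begin

text \<open>Two indices i, j with y i \<noteq> y j (mod p) force a collision
  x i + c y i = x j + c y j exactly for c = -(x i - x j) / (y i - y j) in Z_p, and this c is
  nonzero because the x i are distinct.\<close>

lemma prime_linear_cong_nonzero_solution:
  fixes m d e :: int
  assumes "prime m" and "\<not> [d = 0] (mod m)" and "\<not> [e = 0] (mod m)"
  shows "\<exists>c\<in>{1..<m}. [e + c * d = 0] (mod m)"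
proof -
  have "coprime d m"
    using assms(1,2) prime_imp_coprime coprime_commute by (auto simp: cong_0_iff)
  then obtain u where u: "[d * u = 1] (mod m)"
    using cong_solve_coprime_int by blast
  define c where "c = (- e * u) mod m"
  have "[c = - e * u] (mod m)"
    unfolding c_def by (simp add: cong_def)
  then have "[e + c * d = e + (- e * u) * d] (mod m)"
    by (intro cong_add cong_mult cong_refl)
  also have "e + (- e * u) * d = e + (- e) * (d * u)"
    by (simp add: algebra_simps)
  also have "[e + (- e) * (d * u) = e + (- e) * 1] (mod m)"
    by (intro cong_add cong_mult cong_refl u)
  finally have sol: "[e + c * d = 0] (mod m)"
    by simp
  have "c \<noteq> 0"
  proof
    assume "c = 0"
    with sol assms(3) show False by simp
  qed
  moreover have "0 \<le> c" "c < m"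
    using prime_gt_1_int[OF assms(1)] unfolding c_def by auto
  ultimately show ?thesis
    using sol by auto
qed

lemma residue_diff_not_cong_0:
  fixes a b m :: int
  assumes "a \<in> {0..<m}" and "b \<in> {0..<m}" and "a \<noteq> b"
  shows "\<not> [a - b = 0] (mod m)"
  using assms cong_less_imp_eq_int by (auto simp: cong_iff_dvd_diff cong_0_iff)

theorem lemma4p1:
  fixes p :: nat and x y :: "nat \<Rightarrow> int"
  assumes "prime p"
    and "\<forall>i<p. x i \<in> {0..<int p} \<and> y i \<in> {0..<int p}"
    and "\<forall>i<p. \<forall>j<p. i \<noteq> j \<longrightarrow> x i \<noteq> x j"
    and "\<exists>i<p. \<exists>j<p. y i \<noteq> y j"
  shows "\<exists>c \<in> {1..<int p}. \<not> compatible p c x y"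
proof -
  obtain i j where ij: "i < p" "j < p" "y i \<noteq> y j"
    using assms(4) by blast
  then have "i \<noteq> j" "x i \<noteq> x j"
    using assms(3) by auto
  obtain c where c: "c \<in> {1..<int p}" "[(x i - x j) + c * (y i - y j) = 0] (mod int p)"
  proof (rule prime_linear_cong_nonzero_solution[THEN bexE])
    show "prime (int p)"
      using assms(1) by simp
    show "\<not> [y i - y j = 0] (mod int p)" "\<not> [x i - x j = 0] (mod int p)"
      using residue_diff_not_cong_0 assms(2) ij \<open>x i \<noteq> x j\<close> by auto
  qed
  then have "[x i + c * y i = x j + c * y j] (mod int p)"
    by (simp add: cong_iff_dvd_diff cong_0_iff algebra_simps)
  then have "\<not> compatible p c x y"
    using ij \<open>i \<noteq> j\<close> unfolding compatible_def by blast
  with c show ?thesis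
    by blast
qed

end
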